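(* Let $G$ be a strongly Deza graph with parameters $(n,k,b,a)$ having exactly four distinct eigenvalues $k,\theta_2,\theta_3,\theta_4$ with positive multiplicities $1,m_2,m_3,m_4$, where $\theta_4=-\theta_3$ and $m_3=m_4$. Then $m_2\theta_2=-k$, and one of the following holds: (i) $m_2=1$, $\theta_2=-k$, and $G$ is bipartite with spectrum consisting of $k$ (multiplicity $1$), $\sqrt{k(n-2k)/(n-2)}$ (multiplicity $(n-2)/2$), $-\sqrt{k(n-2k)/(n-2)}$ (multiplicity $(n-2)/2$), and $-k$ (multiplicity $1$); (ii) $m_2=k$, $\theta_2=-1$, and the spectrum of $G$ consists of $k$ (multiplicity $1$), $\sqrt{k}$ (multiplicity $(n-k-1)/2$), $-1$ (multiplicity $k$), and $-\sqrt{k}$ (multiplicity $(n-k-1)/2$); (iii) $m_2<k$ and $\theta_2<-1$.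
   Context: All graphs are finite, simple and undirected; eigenvalues of a graph are those of its adjacency matrix. A Deza graph with parameters $(n,k,b,a)$, where $b\geqslant a$, is a $k$-regular graph on $n$ vertices, which is neither complete nor edgeless, such that any two distinct vertices have exactly $b$ or exactly $a$ common neighbours. If $b>a$, the children $G_A$ and $G_B$ of $G$ are the graphs on the vertex set of $G$ in which two distinct vertices are adjacent if and only if they have exactly $a$ (for $G_A$), respectively exactly $b$ (for $G_B$), common neighbours in $G$; if $b=a$, $G_A$ is the complete graph and $G_B$ is the edgeless graph. A strongly regular graph with parameters $(n,k,\lambda,\mu)$ is a $k$-regular graph on $n$ vertices, neither complete nor edgeless, in which any two adjacent vertices have exactly $\lambda$ common neighbours and any two distinct non-adjacent vertices have exactly $\mu$ common neighbours (disconnected examples, i.e. disjoint unions of at least two cliques of equal size, are allowed). A strongly Deza graph is a Deza graph both of whose children are strongly regular graphs. *)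

theory Defs
  imports Jordan_Normal_Form.Char_Poly
begin

definition is_graph :: "nat \<Rightarrow> (nat \<Rightarrow> nat \<Rightarrow> bool) \<Rightarrow> bool" where
  "is_graph n E \<longleftrightarrow> (\<forall>x y. E x y \<longrightarrow> x < n \<and> y < n) \<and> (\<forall>x y. E x y \<longrightarrow> E y x) \<and> (\<forall>x. \<not> E x x)"

definition common_nbrs :: "nat \<Rightarrow> (nat \<Rightarrow> nat \<Rightarrow> bool) \<Rightarrow> nat \<Rightarrow> nat \<Rightarrow> nat" where
  "common_nbrs n E x y = card {z. z < n \<and> E x z \<and> E y z}"

definition regular :: "nat \<Rightarrow> (nat \<Rightarrow> nat \<Rightarrow> bool) \<Rightarrow> nat \<Rightarrow> bool" where
  "regular n E k \<longleftrightarrow> (\<forall>x < n. card {y. y < n \<and> E x y} = k)"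

definition complete_graph :: "nat \<Rightarrow> (nat \<Rightarrow> nat \<Rightarrow> bool) \<Rightarrow> bool" where
  "complete_graph n E \<longleftrightarrow> (\<forall>x < n. \<forall>y < n. x \<noteq> y \<longrightarrow> E x y)"

definition edgeless :: "nat \<Rightarrow> (nat \<Rightarrow> nat \<Rightarrow> bool) \<Rightarrow> bool" where
  "edgeless n E \<longleftrightarrow> (\<forall>x < n. \<forall>y < n. \<not> E x y)"

definition deza :: "nat \<Rightarrow> (nat \<Rightarrow> nat \<Rightarrow> bool) \<Rightarrow> nat \<Rightarrow> nat \<Rightarrow> nat \<Rightarrow> bool" where
  "deza n E k b a \<longleftrightarrow> is_graph n E \<and> regular n E k \<and> b \<ge> a \<and>
     \<not> complete_graph n E \<and> \<not> edgeless n E \<and>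
     (\<forall>x < n. \<forall>y < n. x \<noteq> y \<longrightarrow> common_nbrs n E x y = b \<or> common_nbrs n E x y = a)"

definition srg :: "nat \<Rightarrow> (nat \<Rightarrow> nat \<Rightarrow> bool) \<Rightarrow> nat \<Rightarrow> nat \<Rightarrow> nat \<Rightarrow> bool" where
  "srg n E k lam mu \<longleftrightarrow> is_graph n E \<and> regular n E k \<and>
     \<not> complete_graph n E \<and> \<not> edgeless n E \<and>
     (\<forall>x < n. \<forall>y < n. E x y \<longrightarrow> common_nbrs n E x y = lam) \<and>
     (\<forall>x < n. \<forall>y < n. x \<noteq> y \<longrightarrow> \<not> E x y \<longrightarrow> common_nbrs n E x y = mu)"

definition child_A :: "nat \<Rightarrow> (nat \<Rightarrow> nat \<Rightarrow> bool) \<Rightarrow> nat \<Rightarrow> nat \<Rightarrow> nat \<Rightarrow> nat \<Rightarrow> bool" where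
  "child_A n E b a = (\<lambda>x y. x < n \<and> y < n \<and> x \<noteq> y \<and> (b > a \<longrightarrow> common_nbrs n E x y = a))"

definition child_B :: "nat \<Rightarrow> (nat \<Rightarrow> nat \<Rightarrow> bool) \<Rightarrow> nat \<Rightarrow> nat \<Rightarrow> nat \<Rightarrow> nat \<Rightarrow> bool" where
  "child_B n E b a = (\<lambda>x y. x < n \<and> y < n \<and> x \<noteq> y \<and> b > a \<and> common_nbrs n E x y = b)"

definition strongly_deza :: "nat \<Rightarrow> (nat \<Rightarrow> nat \<Rightarrow> bool) \<Rightarrow> nat \<Rightarrow> nat \<Rightarrow> nat \<Rightarrow> bool" where
  "strongly_deza n E k b a \<longleftrightarrow> deza n E k b a \<and>
     (\<exists>k' l m. srg n (child_A n E b a) k' l m) \<and> (\<exists>k' l m. srg n (child_B n E b a) k' l m)"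

definition adj_mat :: "nat \<Rightarrow> (nat \<Rightarrow> nat \<Rightarrow> bool) \<Rightarrow> real mat" where
  "adj_mat n E = mat n n (\<lambda>(i, j). if E i j then 1 else 0)"

definition eig_mult :: "real mat \<Rightarrow> real \<Rightarrow> nat" where
  "eig_mult A x = order x (char_poly A)"

definition bipartite :: "nat \<Rightarrow> (nat \<Rightarrow> nat \<Rightarrow> bool) \<Rightarrow> bool" where
  "bipartite n E \<longleftrightarrow> (\<exists>S. \<forall>x < n. \<forall>y < n. E x y \<longrightarrow> (x \<in> S \<longleftrightarrow> y \<notin> S))"

end

theory Submission
  imports Defs Jordan_Normal_Form.Schur_Decomposition
begin

(* Since the adjacency matrix A is real symmetric, its characteristic polynomial splits over the
   reals, and Schur triangularisation gives tr (A^j) = \<Sum> m_i \<theta>_i^j. For a k-regular graph the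
   cases j = 0, 1, 2 read \<Sum> m_i = n, \<Sum> m_i \<theta>_i = 0 and \<Sum> m_i \<theta>_i^2 = nk. With \<theta>4 = -\<theta>3 and
   m3 = m4 the first moment collapses to k + m2 \<theta>2 = 0, so \<theta>2 = -k/m2 is rational; being a root
   of the monic integer polynomial det (xI - A) it is an algebraic integer, hence an integer.
   So \<theta>2 \<le> -1 and m2 \<le> k, with equality exactly when \<theta>2 = -1, and then the second moment
   forces \<theta>3^2 = k. *)

definition mat_trace :: "'a :: comm_ring_1 mat \<Rightarrow> 'a" where
  "mat_trace A = (\<Sum>i<dim_row A. A $$ (i, i))"

lemma mat_trace_mult_comm:
  assumes "A \<in> carrier_mat n n" "B \<in> carrier_mat n n"
  shows "mat_trace (A * B) = mat_trace (B * A)"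
proof -
  have "mat_trace (A * B) = (\<Sum>i<n. \<Sum>j<n. A $$ (i, j) * B $$ (j, i))"
    unfolding mat_trace_def using assms by (simp add: scalar_prod_def lessThan_atLeast0)
  also have "\<dots> = (\<Sum>j<n. \<Sum>i<n. A $$ (i, j) * B $$ (j, i))" by (rule sum.swap)
  also have "\<dots> = mat_trace (B * A)"
    unfolding mat_trace_def using assms by (simp add: scalar_prod_def lessThan_atLeast0 mult.commute)
  finally show ?thesis .
qed

lemma mat_trace_similar_mat_wit:
  assumes "similar_mat_wit A B P Q"
  shows "mat_trace A = mat_trace B"
proof -
  obtain n where A: "A \<in> carrier_mat n n" using assms unfolding similar_mat_wit_def Let_def by auto
  from similar_mat_witD2[OF A assms] have B: "B \<in> carrier_mat n n" and P: "P \<in> carrier_mat n n"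
    and Q: "Q \<in> carrier_mat n n" and QP: "Q * P = 1\<^sub>m n" and AB: "A = P * B * Q" by auto
  have "mat_trace A = mat_trace (P * (B * Q))" using AB P B Q by (simp add: assoc_mult_mat)
  also have "\<dots> = mat_trace (B * Q * P)" using P B Q by (intro mat_trace_mult_comm) auto
  also have "B * Q * P = B" using B Q P QP by (simp add: assoc_mult_mat)
  finally show ?thesis .
qed

lemma upper_triangular_mult:
  assumes A: "A \<in> carrier_mat n n" "upper_triangular A" and B: "B \<in> carrier_mat n n" "upper_triangular B"
  shows "upper_triangular (A * B)" "\<And>i. i < n \<Longrightarrow> (A * B) $$ (i, i) = A $$ (i, i) * B $$ (i, i)"
proof -
  have entry: "(A * B) $$ (i, j) = (\<Sum>l \<in> {i..j}. A $$ (i, l) * B $$ (l, j))"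
    if "i < n" "j < n" for i j
  proof -
    have "(A * B) $$ (i, j) = (\<Sum>l<n. A $$ (i, l) * B $$ (l, j))"
      using A B that by (simp add: scalar_prod_def lessThan_atLeast0)
    also have "\<dots> = (\<Sum>l \<in> {i..j}. A $$ (i, l) * B $$ (l, j))"
      using A B that by (intro sum.mono_neutral_right) (auto simp: upper_triangularD)
    finally show ?thesis .
  qed
  show "upper_triangular (A * B)"
  proof (rule upper_triangularI)
    fix i j assume "j < i" "i < dim_row (A * B)"
    then show "(A * B) $$ (i, j) = 0" using A entry[of i j] by simp
  qed
  show "(A * B) $$ (i, i) = A $$ (i, i) * B $$ (i, i)" if "i < n" for i
    using that by (simp add: entry)
qed

lemma upper_triangular_pow:
  assumes A: "A \<in> carrier_mat n n" "upper_triangular A"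
  shows "upper_triangular (A ^\<^sub>m j) \<and> (\<forall>i<n. (A ^\<^sub>m j) $$ (i, i) = (A $$ (i, i)) ^ j)"
proof (induction j)
  case 0
  show ?case using A by auto
next
  case (Suc j)
  have Aj: "A ^\<^sub>m j \<in> carrier_mat n n" using A by simp
  show ?case
    using Suc upper_triangular_mult[OF Aj _ A] by (simp add: power_commutes)
qed

lemma mat_trace_pow_eq_power_sum:
  fixes A :: "'a :: conjugatable_ordered_field mat"
  assumes A: "A \<in> carrier_mat n n" and split: "char_poly A = (\<Prod>r\<leftarrow>rs. [:-r, 1:])"
  shows "mat_trace (A ^\<^sub>m j) = (\<Sum>r\<leftarrow>rs. r ^ j)"
proof -
  obtain B P Q where "schur_decomposition A rs = (B, P, Q)"
    by (cases "schur_decomposition A rs") auto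
  with schur_decomposition[OF A split] have sim: "similar_mat_wit A B P Q"
    and ut: "upper_triangular B" and diag: "diag_mat B = rs" by auto
  have B: "B \<in> carrier_mat n n" using similar_mat_witD2[OF A sim] by auto
  have "mat_trace (A ^\<^sub>m j) = mat_trace (B ^\<^sub>m j)"
    by (rule mat_trace_similar_mat_wit[OF similar_mat_wit_pow[OF sim]])
  also have "\<dots> = (\<Sum>i<n. (B $$ (i, i)) ^ j)"
    using upper_triangular_pow[OF B ut] B unfolding mat_trace_def by simp
  also have "\<dots> = (\<Sum>r\<leftarrow>diag_mat B. r ^ j)"
    using B by (simp add: diag_mat_def sum_list_sum_nth lessThan_atLeast0)
  finally show ?thesis unfolding diag .
qed

lemma eigenvalue_real_if_symmetric:
  fixes A :: "real mat"
  assumes A: "A \<in> carrier_mat n n" and sym: "A\<^sup>T = A"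
    and ev: "eigenvalue (map_mat complex_of_real A) z"
  shows "z \<in> \<real>"
proof -
  let ?M = "map_mat complex_of_real A"
  have sym_entry: "A $$ (i, j) = A $$ (j, i)" if "i < n" "j < n" for i j
    using A that index_transpose_mat(1)[of j A i] by (simp add: sym)
  from ev obtain v where v: "v \<in> carrier_vec n" "v \<noteq> 0\<^sub>v n" "?M *\<^sub>v v = z \<cdot>\<^sub>v v"
    unfolding eigenvalue_def eigenvector_def using A by auto
  have Mv: "(\<Sum>j<n. complex_of_real (A $$ (i, j)) * v $ j) = z * v $ i" if "i < n" for i
  proof -
    have "(?M *\<^sub>v v) $ i = (z \<cdot>\<^sub>v v) $ i" using v by simp
    then show ?thesis
      using that A v(1) by (simp add: scalar_prod_def lessThan_atLeast0 mult.commute)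
  qed
  define q where "q = (\<Sum>i<n. cnj (v $ i) * (\<Sum>j<n. complex_of_real (A $$ (i, j)) * v $ j))"
  define r where "r = (\<Sum>i<n. (cmod (v $ i))\<^sup>2)"
  \<comment> \<open>The Hermitian form \<open>q = v\<^sup>* A v\<close> is real and equals \<open>z |v|\<^sup>2\<close>.\<close>
  have "q = z * (\<Sum>i<n. cnj (v $ i) * v $ i)"
    unfolding q_def by (simp add: Mv sum_distrib_left mult.assoc mult.left_commute)
  also have "(\<Sum>i<n. cnj (v $ i) * v $ i) = complex_of_real r"
    unfolding r_def of_real_sum by (simp add: complex_norm_square mult.commute del: of_real_power)
  finally have "q = z * complex_of_real r" .
  moreover have "cnj q = q"
  proof -
    have "cnj q = (\<Sum>i<n. v $ i * (\<Sum>j<n. complex_of_real (A $$ (i, j)) * cnj (v $ j)))"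
      unfolding q_def by (simp add: cnj_sum)
    also have "\<dots> = (\<Sum>i<n. \<Sum>j<n. complex_of_real (A $$ (i, j)) * cnj (v $ j) * v $ i)"
      by (simp add: sum_distrib_left mult_ac)
    also have "\<dots> = (\<Sum>j<n. \<Sum>i<n. complex_of_real (A $$ (i, j)) * cnj (v $ j) * v $ i)"
      by (rule sum.swap)
    also have "\<dots> = q"
      unfolding q_def by (auto simp: sum_distrib_left mult_ac sym_entry intro!: sum.cong)
    finally show ?thesis .
  qed
  moreover have "r > 0"
  proof -
    obtain i where "i < n" "v $ i \<noteq> 0"
      using v by (metis eq_vecI carrier_vecD index_zero_vec(1,2))
    then show ?thesis unfolding r_def by (intro sum_pos2[of _ i]) auto
  qed
  ultimately have "cnj z = z" by simp
  then show ?thesis by (metis Reals_cnj_iff)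
qed

lemma char_poly_splits_if_symmetric:
  fixes A :: "real mat"
  assumes A: "A \<in> carrier_mat n n" and sym: "A\<^sup>T = A"
  obtains rs where "char_poly A = (\<Prod>r\<leftarrow>rs. [:-r, 1:])"
proof -
  let ?M = "map_mat complex_of_real A"
  have M: "?M \<in> carrier_mat n n" using A by simp
  obtain cs where cs: "char_poly ?M = (\<Prod>c\<leftarrow>cs. [:-c, 1:])"
    using char_poly_factorized[OF M] by blast
  have "c \<in> \<real>" if "c \<in> set cs" for c
  proof -
    have "poly (char_poly ?M) c = 0"
      unfolding cs poly_prod_list using that by (auto simp: prod_list_zero_iff)
    then show ?thesis
      using eigenvalue_real_if_symmetric[OF A sym] eigenvalue_root_char_poly[OF M] by blast
  qed
  then have cs_real: "cs = map (complex_of_real \<circ> Re) cs"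
    by (induction cs) (auto simp: complex_is_Real_iff complex_eq_iff)
  interpret of_real_poly: map_poly_inj_comm_ring_hom complex_of_real ..
  have "map_poly complex_of_real (char_poly A) = char_poly ?M"
    by (rule of_real_hom.char_poly_hom[OF A, symmetric])
  also have "\<dots> = map_poly complex_of_real (\<Prod>r\<leftarrow>map Re cs. [:-r, 1:])"
    by (subst cs, subst cs_real) (simp add: of_real_poly.hom_prod_list o_def)
  finally have "char_poly A = (\<Prod>r\<leftarrow>map Re cs. [:-r, 1:])" by simp
  then show ?thesis by (rule that)
qed

lemma order_prod_linear_factors:
  "Polynomial.order x (\<Prod>r\<leftarrow>rs. [:-r, 1:]) = count_list rs (x :: 'a :: idom)"
proof (induction rs)
  case Nil
  show ?case by (simp add: order_0I)
next
  case (Cons r rs)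
  have "[:-r, 1:] \<noteq> 0" "(\<Prod>r\<leftarrow>rs. [:-r, 1:]) \<noteq> 0"
    by (auto simp: prod_list_zero_iff)
  then have "Polynomial.order x ([:-r, 1:] * (\<Prod>r\<leftarrow>rs. [:-r, 1:]))
      = Polynomial.order x [:-r, 1:] + Polynomial.order x (\<Prod>r\<leftarrow>rs. [:-r, 1:])"
    by (intro order_mult no_zero_divisors)
  moreover have "Polynomial.order x [:-r, 1:] = (if x = r then 1 else 0)"
    using order_power_n_n[of r 1] by (auto intro: order_0I)
  ultimately show ?case using Cons by simp
qed

lemma sum_list_map_eq_sum_count_of_nat:
  assumes "finite X" "set xs \<subseteq> X"
  shows "(\<Sum>x\<leftarrow>xs. f x) = (\<Sum>x\<in>X. of_nat (count_list xs x) * (f x :: 'b :: comm_semiring_1))"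
  using assms(2)
proof (induction xs)
  case (Cons y xs)
  have "of_nat (count_list (y # xs) x) * f x = of_nat (count_list xs x) * f x + (if x = y then f x else 0)"
    for x by (simp add: distrib_right add.commute)
  then have "(\<Sum>x\<in>X. of_nat (count_list (y # xs) x) * f x)
      = (\<Sum>x\<in>X. of_nat (count_list xs x) * f x) + (\<Sum>x\<in>X. if x = y then f x else 0)"
    by (simp only: sum.distrib)
  also have "(\<Sum>x\<in>X. if x = y then f x else 0) = f y"
    using Cons.prems assms(1) by (simp add: sum.delta)
  finally show ?case using Cons by (simp add: add.commute)
qed simp

lemma symmetric_eig_mult_power_sum:
  fixes A :: "real mat"
  assumes A: "A \<in> carrier_mat n n" and sym: "A\<^sup>T = A"
    and S: "finite S" "{x. eigenvalue A x} \<subseteq> S"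
  shows "(\<Sum>x\<in>S. real (eig_mult A x) * x ^ j) = mat_trace (A ^\<^sub>m j)"
proof -
  obtain rs where split: "char_poly A = (\<Prod>r\<leftarrow>rs. [:-r, 1:])"
    using char_poly_splits_if_symmetric[OF A sym] .
  have "set rs \<subseteq> {x. eigenvalue A x}"
    unfolding eigenvalue_root_char_poly[OF A] split poly_prod_list
    by (auto simp: prod_list_zero_iff)
  then have "(\<Sum>r\<leftarrow>rs. r ^ j) = (\<Sum>x\<in>S. real (count_list rs x) * x ^ j)"
    using S by (intro sum_list_map_eq_sum_count_of_nat) auto
  then show ?thesis
    unfolding mat_trace_pow_eq_power_sum[OF A split] eig_mult_def split order_prod_linear_factors
    by simp
qed

lemma adj_mat_carrier: "adj_mat n E \<in> carrier_mat n n"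
  unfolding adj_mat_def by simp

lemma adj_mat_transpose: "is_graph n E \<Longrightarrow> (adj_mat n E)\<^sup>T = adj_mat n E"
  unfolding adj_mat_def is_graph_def by (rule eq_matI) auto

lemma adj_mat_trace: "is_graph n E \<Longrightarrow> mat_trace (adj_mat n E) = 0"
  unfolding mat_trace_def adj_mat_def is_graph_def by simp

lemma adj_mat_square_diag:
  assumes g: "is_graph n E" and r: "regular n E k" and i: "i < n"
  shows "(adj_mat n E * adj_mat n E) $$ (i, i) = real k"
proof -
  let ?A = "adj_mat n E"
  have "(?A * ?A) $$ (i, i) = (\<Sum>j<n. ?A $$ (i, j) * ?A $$ (j, i))"
    using i adj_mat_carrier[of n E] by (simp add: scalar_prod_def lessThan_atLeast0)
  also have "\<dots> = (\<Sum>j<n. if E i j then 1 else 0)"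
    using g i unfolding adj_mat_def is_graph_def by (intro sum.cong) auto
  also have "\<dots> = real (card {j. j < n \<and> E i j})"
    by (simp add: sum.If_cases lessThan_def Collect_conj_eq)
  also have "card {j. j < n \<and> E i j} = k"
    using r i unfolding regular_def by auto
  finally show ?thesis .
qed

lemma regular_graph_eig_mult_moments:
  assumes g: "is_graph n E" and r: "regular n E k"
    and S: "finite S" "{x. eigenvalue (adj_mat n E) x} \<subseteq> S"
  shows "(\<Sum>x\<in>S. real (eig_mult (adj_mat n E) x)) = real n"
    and "(\<Sum>x\<in>S. real (eig_mult (adj_mat n E) x) * x) = 0"
    and "(\<Sum>x\<in>S. real (eig_mult (adj_mat n E) x) * x\<^sup>2) = real n * real k"
proof -
  let ?A = "adj_mat n E"
  note power_sum = symmetric_eig_mult_power_sum[OF adj_mat_carrier adj_mat_transpose[OF g] S]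
  show "(\<Sum>x\<in>S. real (eig_mult ?A x)) = real n"
    using power_sum[of 0] adj_mat_carrier[of n E] by (simp add: mat_trace_def)
  show "(\<Sum>x\<in>S. real (eig_mult ?A x) * x) = 0"
    using power_sum[of 1] adj_mat_carrier[of n E] by (simp add: adj_mat_trace[OF g])
  have "?A ^\<^sub>m 2 = ?A * ?A"
    using adj_mat_carrier[of n E] by (simp add: numeral_2_eq_2)
  then show "(\<Sum>x\<in>S. real (eig_mult ?A x) * x\<^sup>2) = real n * real k"
    using power_sum[of 2] adj_mat_square_diag[OF g r] adj_mat_carrier[of n E]
    by (simp add: mat_trace_def)
qed

lemma regular_graph_opposite_pair_moments:
  fixes \<theta> \<eta> :: real
  assumes g: "is_graph n E" and r: "regular n E k"
    and spec: "{x. eigenvalue (adj_mat n E) x} = {real k, \<theta>, \<eta>, - \<eta>}"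
    and four: "card {real k, \<theta>, \<eta>, - \<eta>} = 4"
    and mults: "eig_mult (adj_mat n E) (real k) = 1" "eig_mult (adj_mat n E) \<theta> = m"
      "eig_mult (adj_mat n E) \<eta> = l" "eig_mult (adj_mat n E) (- \<eta>) = l"
  shows "real n = 1 + real m + 2 * real l"
    and "real m * \<theta> = - real k"
    and "real n * real k = (real k)\<^sup>2 + real m * \<theta>\<^sup>2 + 2 * real l * \<eta>\<^sup>2"
proof -
  have distinct: "real k \<noteq> \<theta>" "real k \<noteq> \<eta>" "real k \<noteq> - \<eta>" "\<theta> \<noteq> \<eta>" "\<theta> \<noteq> - \<eta>" "\<eta> \<noteq> - \<eta>"
    using four by (auto simp: card_insert_if split: if_splits)
  note moments = regular_graph_eig_mult_moments[OF g r, of "{real k, \<theta>, \<eta>, - \<eta>}", unfolded spec]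
  show "real n = 1 + real m + 2 * real l"
    and "real m * \<theta> = - real k"
    and "real n * real k = (real k)\<^sup>2 + real m * \<theta>\<^sup>2 + 2 * real l * \<eta>\<^sup>2"
    using moments distinct mults by (simp_all add: algebra_simps)
qed

lemma adj_mat_eigenvalue_algebraic_int:
  assumes "eigenvalue (adj_mat n E) x"
  shows "algebraic_int x"
proof -
  define B :: "int mat" where "B = mat n n (\<lambda>(i, j). if E i j then 1 else 0)"
  have B: "B \<in> carrier_mat n n" unfolding B_def by simp
  have "adj_mat n E = map_mat of_int B"
    unfolding B_def adj_mat_def by (rule eq_matI) auto
  then have "char_poly (adj_mat n E) = map_poly of_int (char_poly B)"
    using of_int_hom.char_poly_hom[OF B] by simp
  moreover have "poly (char_poly (adj_mat n E)) x = 0"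
    using assms eigenvalue_root_char_poly[OF adj_mat_carrier] by simp
  moreover have "lead_coeff (char_poly B) = 1"
    using degree_monic_char_poly[OF B] by simp
  ultimately show ?thesis unfolding algebraic_int_altdef_ipoly by metis
qed

lemma adj_mat_rational_eigenvalue_Ints:
  "eigenvalue (adj_mat n E) x \<Longrightarrow> x \<in> \<rat> \<Longrightarrow> x \<in> \<int>"
  using adj_mat_eigenvalue_algebraic_int rational_algebraic_int_is_int by blast

lemma negative_integer_multiple_cases:
  fixes m k :: nat and \<theta> :: real
  assumes "\<theta> \<in> \<int>" "m > 0" "k > 0" "real m * \<theta> = - real k"
  shows "(m = k \<and> \<theta> = -1) \<or> (m < k \<and> \<theta> < -1)"
proof -
  have "real m * \<theta> < 0" using assms(3,4) by simp
  then have "\<theta> < 0" using assms(2) by (simp add: mult_less_0_iff)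
  then have "\<theta> \<le> -1" using assms(1) by (auto elim!: Ints_cases)
  then consider "\<theta> = -1" | "\<theta> < -1" by linarith
  then show ?thesis
  proof cases
    case 1
    then show ?thesis using assms(4) by simp
  next
    case 2
    then have "real m * \<theta> < real m * (-1)" using assms(2) by (intro mult_strict_left_mono) auto
    then show ?thesis using 2 assms(4) by simp
  qed
qed

lemma opposite_pair_eq_pm_sqrt:
  fixes \<eta> x :: real
  assumes "\<eta>\<^sup>2 = x"
  shows "{\<eta>, - \<eta>} = {sqrt x, - sqrt x}"
  using assms by (cases "\<eta> \<ge> 0") auto

theorem theorem8:
  fixes n k b a m2 m3 m4 :: nat and E :: "nat \<Rightarrow> nat \<Rightarrow> bool"
    and \<theta>2 \<theta>3 \<theta>4 :: real
  assumes sd: "strongly_deza n E k b a"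
    and spec: "{x. eigenvalue (adj_mat n E) x} = {real k, \<theta>2, \<theta>3, \<theta>4}"
    and four: "card {real k, \<theta>2, \<theta>3, \<theta>4} = 4"
    and mk: "eig_mult (adj_mat n E) (real k) = 1"
    and m2: "eig_mult (adj_mat n E) \<theta>2 = m2"
    and m3: "eig_mult (adj_mat n E) \<theta>3 = m3"
    and m4: "eig_mult (adj_mat n E) \<theta>4 = m4"
    and pos: "m2 > 0" "m3 > 0" "m4 > 0"
    and opp: "\<theta>4 = - \<theta>3"
    and eqm: "m3 = m4"
  shows "real m2 * \<theta>2 = - real k \<and>
    ((m2 = 1 \<and> \<theta>2 = - real k \<and> bipartite n E \<and>
       (let s = sqrt (real k * (real n - 2 * real k) / (real n - 2)) in
         {x. eigenvalue (adj_mat n E) x} = {real k, s, - s, - real k} \<and>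
         eig_mult (adj_mat n E) (real k) = 1 \<and>
         real (eig_mult (adj_mat n E) s) = (real n - 2) / 2 \<and>
         real (eig_mult (adj_mat n E) (- s)) = (real n - 2) / 2 \<and>
         eig_mult (adj_mat n E) (- real k) = 1))
     \<or> (m2 = k \<and> \<theta>2 = -1 \<and>
       {x. eigenvalue (adj_mat n E) x} = {real k, sqrt (real k), -1, - sqrt (real k)} \<and>
       eig_mult (adj_mat n E) (real k) = 1 \<and>
       real (eig_mult (adj_mat n E) (sqrt (real k))) = (real n - real k - 1) / 2 \<and>
       eig_mult (adj_mat n E) (-1) = k \<and>
       real (eig_mult (adj_mat n E) (- sqrt (real k))) = (real n - real k - 1) / 2)
     \<or> (m2 < k \<and> \<theta>2 < -1))"
proof -
  let ?A = "adj_mat n E"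
  have g: "is_graph n E" and r: "regular n E k"
    using sd unfolding strongly_deza_def deza_def by auto
  have "real n = 1 + real m2 + 2 * real m3" and main: "real m2 * \<theta>2 = - real k"
    and "real n * real k = (real k)\<^sup>2 + real m2 * \<theta>2\<^sup>2 + 2 * real m3 * \<theta>3\<^sup>2"
    using regular_graph_opposite_pair_moments[OF g r, of \<theta>2 \<theta>3 m2 m3] spec four mk m2 m3 m4
    unfolding opp eqm by simp_all
  note dim = this(1) and trace2 = this(3)
  have "\<theta>2 = - real k / real m2" using main pos(1) by (simp add: field_simps)
  then have "\<theta>2 \<in> \<rat>" by simp
  then have "\<theta>2 \<in> \<int>" using adj_mat_rational_eigenvalue_Ints spec by blast
  moreover have "k > 0"
    using main four pos(1) by (cases "k = 0") (auto simp: card_insert_if split: if_splits)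
  ultimately consider "m2 = k" "\<theta>2 = -1" | "m2 < k" "\<theta>2 < -1"
    using negative_integer_multiple_cases pos(1) main by blast
  then show ?thesis
  proof cases
    case 1
    have "\<theta>3\<^sup>2 = real k" using dim trace2 main 1 pos(2) by (simp add: power2_eq_square algebra_simps)
    then have "{\<theta>3, \<theta>4} = {sqrt (real k), - sqrt (real k)}"
      unfolding opp by (rule opposite_pair_eq_pm_sqrt)
    then have "{x. eigenvalue ?A x} = {real k, sqrt (real k), -1, - sqrt (real k)}"
      and "eig_mult ?A (sqrt (real k)) = m3" "eig_mult ?A (- sqrt (real k)) = m3"
      using spec 1 m3 m4 eqm by (auto simp: doubleton_eq_iff)
    moreover have "real m3 = (real n - real k - 1) / 2" using dim 1 by simp
    ultimately show ?thesis
      by (intro conjI[OF main disjI2[OF disjI1]]) (use 1 mk m2 in simp)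
  next
    case 2
    then show ?thesis by (intro conjI[OF main disjI2[OF disjI2]]) simp
  qed
qed

end
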